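(* For any $\phi\in\mathrm{Hom}(C(X,\mathbb{Z}),\mathbb{Z})$ with $\phi(1)=0$, there exist a set of horizontal edges $\mathcal H$ (possibly containing several edges between the same pair of vertices, hence possibly bigger than the maximal set) and a choice function $\tau$ such that $\varphi_{\tau,\mathcal H}=\phi$.
   Context: Let $(X,d)$ be an infinite compact ultrametric space, identified with the boundary $\partial\mathcal{T}$ (infinite paths from the root) of its Michon tree $\mathcal{T}=(\mathcal{T}^{(0)},\mathcal{T}^{(1)})$; $K_0(C(X))\cong C(X,\mathbb{Z})$, spanned by the indicator functions $\chi_v$ of the sets of paths through vertices $v$. For a vertex $v$ of level $n$, $\mathcal{T}^{(0)}(v)$ denotes its successors at level $n+1$; horizontal edges of level $n+1$ join distinct vertices of some $\mathcal{T}^{(0)}(v)$. A choice function $\tau:\mathcal{T}^{(0)}\to\partial\mathcal{T}$ satisfies: $\tau(v)$ passes through $v$, and if $w\prec v$ then $\tau(w)=\tau(v)$ iff $\tau(w)$ passes through $v$. Given an oriented set of horizontal edges $\mathcal H=\mathcal H^+\cup\mathcal H^-$ and $\tau$, the even Fredholm module on $\ell^2(\mathcal H^+)\oplus\ell^2(\mathcal H^-)$ with representation $\pi_\tau(f)\psi(h)=f(\tau(s(h)))\psi(h)$ and $F$ having off-diagonal part $T1_h=1_{h^{\mathrm{op}}}$ defines via the Connes pairing the homomorphism $\varphi_{\tau,\mathcal H}:C(X,\mathbb{Z})\to\mathbb{Z}$, $\varphi_{\tau,\mathcal H}(\chi_v)=\sum_{h\in\mathcal H^+}\big(\chi_v(\tau(s(h)))-\chi_v(\tau(r(h)))\big)$.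 One always has $\varphi_{\tau,\mathcal H}(1)=0$. *)

theory Defs
  imports Main "HOL-Library.Sublist"
begin

text \<open>A rooted, locally finite tree without leaves, encoded as a prefix-closed set
  of finite words.\<close>

definition succs :: "'a list set \<Rightarrow> 'a list \<Rightarrow> 'a list set" where
  "succs T v = {v @ [a] | a. v @ [a] \<in> T}"

definition is_tree :: "'a list set \<Rightarrow> bool" where
  "is_tree T \<longleftrightarrow> [] \<in> T
     \<and> (\<forall>v a. v @ [a] \<in> T \<longrightarrow> v \<in> T)
     \<and> (\<forall>v\<in>T. finite (succs T v) \<and> succs T v \<noteq> {})"

definition pref :: "(nat \<Rightarrow> 'a) \<Rightarrow> nat \<Rightarrow> 'a list" where
  "pref p n = map p [0..<n]"

definition boundary :: "'a list set \<Rightarrow> (nat \<Rightarrow> 'a) set" where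
  "boundary T = {p. \<forall>n. pref p n \<in> T}"

definition through :: "(nat \<Rightarrow> 'a) \<Rightarrow> 'a list \<Rightarrow> bool" where
  "through p v \<longleftrightarrow> pref p (length v) = v"

text \<open>C(X,Z) for X the boundary: continuous (= locally constant) integer valued
  functions on the boundary (product topology, discrete letters), normalised to
  be 0 off the boundary.\<close>
definition CXZ :: "'a list set \<Rightarrow> ((nat \<Rightarrow> 'a) \<Rightarrow> int) set" where
  "CXZ T = {f. (\<forall>p\<in>boundary T. \<exists>n. \<forall>q\<in>boundary T. pref q n = pref p n \<longrightarrow> f q = f p)
              \<and> (\<forall>p. p \<notin> boundary T \<longrightarrow> f p = 0)}"

definition chi :: "'a list set \<Rightarrow> 'a list \<Rightarrow> (nat \<Rightarrow> 'a) \<Rightarrow> int" where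
  "chi T v p = (if p \<in> boundary T \<and> through p v then 1 else 0)"

definition is_hom :: "'a list set \<Rightarrow> (((nat \<Rightarrow> 'a) \<Rightarrow> int) \<Rightarrow> int) \<Rightarrow> bool" where
  "is_hom T \<phi> \<longleftrightarrow> (\<forall>f\<in>CXZ T. \<forall>g\<in>CXZ T. \<phi> (\<lambda>p. f p + g p) = \<phi> f + \<phi> g)"

definition horizontal :: "'a list set \<Rightarrow> 'a list \<Rightarrow> 'a list \<Rightarrow> bool" where
  "horizontal T w1 w2 \<longleftrightarrow> w1 \<in> T \<and> w2 \<in> T \<and> w1 \<noteq> w2
     \<and> (\<exists>v. w1 \<in> succs T v \<and> w2 \<in> succs T v)"

definition choice_fun :: "'a list set \<Rightarrow> ('a list \<Rightarrow> (nat \<Rightarrow> 'a)) \<Rightarrow> bool" where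
  "choice_fun T \<tau> \<longleftrightarrow>
     (\<forall>v\<in>T. \<tau> v \<in> boundary T \<and> through (\<tau> v) v)
     \<and> (\<forall>v\<in>T. \<forall>w\<in>T. strict_prefix w v \<longrightarrow> (\<tau> w = \<tau> v \<longleftrightarrow> through (\<tau> w) v))"

text \<open>An oriented set of horizontal edges (with multiplicities) is encoded by
  m w1 w2 = number of edges h in H+ with s(h) = w1, r(h) = w2; H- consists of
  the opposite edges.\<close>
definition edge_mult_ok :: "'a list set \<Rightarrow> ('a list \<Rightarrow> 'a list \<Rightarrow> nat) \<Rightarrow> bool" where
  "edge_mult_ok T m \<longleftrightarrow> (\<forall>w1 w2. m w1 w2 > 0 \<longrightarrow> horizontal T w1 w2)"

definition contrib_edges ::
  "'a list set \<Rightarrow> ('a list \<Rightarrow> (nat \<Rightarrow> 'a)) \<Rightarrow> ('a list \<Rightarrow> 'a list \<Rightarrow> nat) \<Rightarrow> 'a list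
    \<Rightarrow> ('a list \<times> 'a list) set" where
  "contrib_edges T \<tau> m v = {(w1, w2). m w1 w2 > 0 \<and> chi T v (\<tau> w1) \<noteq> chi T v (\<tau> w2)}"

definition varphi ::
  "'a list set \<Rightarrow> ('a list \<Rightarrow> (nat \<Rightarrow> 'a)) \<Rightarrow> ('a list \<Rightarrow> 'a list \<Rightarrow> nat) \<Rightarrow> 'a list \<Rightarrow> int" where
  "varphi T \<tau> m v = (\<Sum>(w1, w2)\<in>contrib_edges T \<tau> m v.
       int (m w1 w2) * (chi T v (\<tau> w1) - chi T v (\<tau> w2)))"

end

theory Submission
  imports Defs
begin

text \<open>
  Fix a canonical child of every vertex and let \<open>\<tau> w\<close> be the path that runs through \<open>w\<close> and
  then always takes canonical children; the charge \<open>a v = \<phi> (\<chi>\<^sub>v)\<close> is additive over the successors of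
  a vertex and vanishes at the root.  Join every non-canonical vertex \<open>w\<close> to its canonical
  sibling \<open>c\<close> by \<open>|a w|\<close> edges, oriented from \<open>w\<close> to \<open>c\<close> when \<open>a w > 0\<close>.  Pairing with
  \<open>\<chi>\<^sub>v\<close> only sees edges between children of proper prefixes of \<open>v\<close>.  Passing from \<open>u\<close> to a
  child \<open>v\<close>, the older edges contribute \<open>a u\<close> if \<open>v\<close> is canonical and \<open>0\<close> otherwise, while
  the edges among the children of \<open>u\<close> contribute \<open>a v - a u\<close> resp. \<open>a v\<close>, because the
  charges of the children of \<open>u\<close> add up to \<open>a u\<close>.  Induction on \<open>v\<close> gives
  \<open>\<phi>\<^sub>\<tau>\<^sub>,\<^sub>H (\<chi>\<^sub>v) = a v\<close>.
\<close>

definition canon_child :: "'a list set \<Rightarrow> 'a list \<Rightarrow> 'a list" where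
  "canon_child T u = u @ [SOME a. u @ [a] \<in> T]"

fun canon_pref :: "'a list set \<Rightarrow> 'a list \<Rightarrow> nat \<Rightarrow> 'a list" where
  "canon_pref T w 0 = []"
| "canon_pref T w (Suc n) =
     (if Suc n \<le> length w then take (Suc n) w else canon_child T (canon_pref T w n))"

definition canon_path :: "'a list set \<Rightarrow> 'a list \<Rightarrow> nat \<Rightarrow> 'a" where
  "canon_path T w = (\<lambda>n. canon_pref T w (Suc n) ! n)"

declare canon_pref.simps(2)[simp del]

lemma length_canon_pref [simp]: "length (canon_pref T w n) = n"
  by (induction n) (auto simp: canon_child_def canon_pref.simps(2))

lemma canon_pref_short: "n \<le> length w \<Longrightarrow> canon_pref T w n = take n w"
  by (induction n) (auto simp: canon_pref.simps(2))

lemma canon_pref_long: "length w \<le> n \<Longrightarrow> canon_pref T w (Suc n) = canon_child T (canon_pref T w n)"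
  by (simp add: canon_pref.simps(2))

lemma canon_pref_Suc_eq_snoc:
  assumes "length w \<le> length u"
  shows "canon_pref T w (Suc (length u)) = u @ [x]
     \<longleftrightarrow> canon_pref T w (length u) = u \<and> canon_child T u = u @ [x]"
  using canon_pref_long[OF assms, of T] by (auto simp: canon_child_def)

lemma canon_pref_take: "n \<le> k \<Longrightarrow> canon_pref T w n = take n (canon_pref T w k)"
proof (induction k rule: dec_induct)
  case (step k)
  have "canon_pref T w k = take k (canon_pref T w (Suc k))"
    by (cases "Suc k \<le> length w") (auto simp: canon_pref.simps(2) canon_pref_short canon_child_def min_def)
  with step show ?case by (simp add: min_absorb1)
qed simp

lemma canon_pref_prefix: "length w \<le> n \<Longrightarrow> take (length w) (canon_pref T w n) = w"
  using canon_pref_take[of "length w" n T w] by (simp add: canon_pref_short)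

lemma pref_canon_path [simp]: "pref (canon_path T w) n = canon_pref T w n"
proof (rule nth_equalityI)
  fix i assume "i < length (pref (canon_path T w) n)"
  then have "i < n" by (simp add: pref_def)
  then have "canon_pref T w (Suc i) ! i = canon_pref T w n ! i"
    by (metis canon_pref_take Suc_leI lessI nth_take)
  with \<open>i < n\<close> show "pref (canon_path T w) n ! i = canon_pref T w n ! i"
    by (simp add: pref_def canon_path_def)
qed (simp add: pref_def)

lemma through_canon_path: "through (canon_path T w) v \<longleftrightarrow> canon_pref T w (length v) = v"
  by (simp add: through_def)

lemma canon_pref_eq:
  assumes "length w \<le> length v" and "canon_pref T w (length v) = v"
  shows "canon_pref T w n = canon_pref T v n"
proof (induction n)
  case (Suc n)
  show ?case
  proof (cases "Suc n \<le> length v")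
    case True
    then show ?thesis
      using assms(2) canon_pref_take[OF True, of T w] by (simp add: canon_pref_short)
  next
    case False
    with Suc assms(1) show ?thesis by (simp add: canon_pref.simps(2))
  qed
qed simp

lemma pref_take: "n \<le> k \<Longrightarrow> pref p n = take n (pref p k)"
  by (simp add: pref_def take_map)

lemma chi_in_CXZ: "chi T v \<in> CXZ T"
  unfolding CXZ_def chi_def through_def by (auto intro!: exI[of _ "length v"])

lemma zero_in_CXZ: "(\<lambda>p. 0) \<in> CXZ T"
  unfolding CXZ_def by auto

lemma add_in_CXZ:
  assumes "f \<in> CXZ T" "g \<in> CXZ T"
  shows "(\<lambda>p. f p + g p) \<in> CXZ T"
  unfolding CXZ_def
proof (intro CollectI conjI ballI allI impI)
  fix p assume p: "p \<in> boundary T"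
  obtain n1 where n1: "\<forall>q\<in>boundary T. pref q n1 = pref p n1 \<longrightarrow> f q = f p"
    using assms(1) p unfolding CXZ_def by blast
  obtain n2 where n2: "\<forall>q\<in>boundary T. pref q n2 = pref p n2 \<longrightarrow> g q = g p"
    using assms(2) p unfolding CXZ_def by blast
  show "\<exists>n. \<forall>q\<in>boundary T. pref q n = pref p n \<longrightarrow> f q + g q = f p + g p"
  proof (intro exI[of _ "max n1 n2"] ballI impI)
    fix q assume "q \<in> boundary T" and "pref q (max n1 n2) = pref p (max n1 n2)"
    then have "pref q n1 = pref p n1" and "pref q n2 = pref p n2"
      by (metis pref_take max.cobounded1, metis pref_take max.cobounded2)
    with \<open>q \<in> boundary T\<close> n1 n2 show "f q + g q = f p + g p" by simp
  qed
qed (use assms in \<open>auto simp: CXZ_def\<close>)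

lemma sum_in_CXZ: "(\<And>i. i \<in> S \<Longrightarrow> f i \<in> CXZ T) \<Longrightarrow> (\<lambda>p. \<Sum>i\<in>S. f i p) \<in> CXZ T"
  by (induction S rule: infinite_finite_induct) (auto intro: add_in_CXZ zero_in_CXZ)

lemma is_hom_zero: "is_hom T \<phi> \<Longrightarrow> \<phi> (\<lambda>p. 0) = 0"
  using zero_in_CXZ[of T] unfolding is_hom_def by fastforce

lemma is_hom_sum:
  assumes "is_hom T \<phi>" and "\<And>i. i \<in> S \<Longrightarrow> f i \<in> CXZ T"
  shows "\<phi> (\<lambda>p. \<Sum>i\<in>S. f i p) = (\<Sum>i\<in>S. \<phi> (f i))"
  using assms(2)
proof (induction S rule: infinite_finite_induct)
  case (insert x S)
  then have "\<phi> (\<lambda>p. f x p + (\<Sum>i\<in>S. f i p)) = \<phi> (f x) + \<phi> (\<lambda>p. \<Sum>i\<in>S. f i p)"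
    using assms(1) sum_in_CXZ[of S f T] unfolding is_hom_def by simp
  with insert show ?case by simp
qed (simp_all add: is_hom_zero[OF assms(1)])

lemma succs_iff: "w \<in> succs T u \<longleftrightarrow> w \<in> T \<and> w \<noteq> [] \<and> butlast w = u"
  unfolding succs_def by (cases w rule: rev_cases) auto

lemma length_succs: "w \<in> succs T u \<Longrightarrow> length w = Suc (length u)"
  by (auto simp: succs_def)

locale leafless_tree =
  fixes T :: "'a list set"
  assumes is_tree: "is_tree T"
begin

lemma root_in: "[] \<in> T"
  using is_tree by (simp add: is_tree_def)

lemma finite_succs: "u \<in> T \<Longrightarrow> finite (succs T u)"
  using is_tree by (simp add: is_tree_def)

lemma prefix_in: "u @ w \<in> T \<Longrightarrow> u \<in> T"
proof (induction w rule: rev_induct)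
  case (snoc a w)
  then show ?case using is_tree unfolding is_tree_def by (metis append_assoc)
qed simp

lemma take_in: "v \<in> T \<Longrightarrow> take n v \<in> T"
  using prefix_in[of "take n v" "drop n v"] by simp

lemma canon_child_in_succs: "u \<in> T \<Longrightarrow> canon_child T u \<in> succs T u"
proof -
  assume "u \<in> T"
  then obtain a where "u @ [a] \<in> T"
    using is_tree unfolding is_tree_def succs_def by blast
  then have "u @ [SOME a. u @ [a] \<in> T] \<in> T" by (rule someI)
  then show ?thesis by (auto simp: canon_child_def succs_def)
qed

lemma canon_pref_in: "w \<in> T \<Longrightarrow> canon_pref T w n \<in> T"
  by (induction n) (auto simp: root_in take_in canon_pref.simps(2) succs_iff
      dest: canon_child_in_succs)

lemma canon_path_in_boundary: "w \<in> T \<Longrightarrow> canon_path T w \<in> boundary T"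
  by (simp add: boundary_def canon_pref_in)

lemma through_canon_path_self: "through (canon_path T w) w"
  by (simp add: through_canon_path canon_pref_short)

lemma choice_fun_canon_path: "choice_fun T (canon_path T)"
  unfolding choice_fun_def
proof (intro conjI ballI impI)
  fix v w :: "'a list" assume "strict_prefix w v"
  then have "length w \<le> length v" by (simp add: prefix_length_le)
  show "canon_path T w = canon_path T v \<longleftrightarrow> through (canon_path T w) v"
  proof
    assume "through (canon_path T w) v"
    then have "canon_pref T w n = canon_pref T v n" for n
      using canon_pref_eq \<open>length w \<le> length v\<close> by (simp add: through_canon_path)
    then show "canon_path T w = canon_path T v" by (simp add: canon_path_def)
  qed (simp add: through_canon_path_self)
qed (simp_all add: canon_path_in_boundary through_canon_path_self)

lemma chi_canon_path:
  "w \<in> T \<Longrightarrow> chi T v (canon_path T w) = (if canon_pref T w (length v) = v then 1 else 0)"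
  by (simp add: chi_def canon_path_in_boundary through_canon_path)

lemma chi_eq_sum_succs:
  assumes "u \<in> T"
  shows "chi T u = (\<lambda>p. \<Sum>w\<in>succs T u. chi T w p)"
proof
  fix p
  show "chi T u p = (\<Sum>w\<in>succs T u. chi T w p)"
  proof (cases "p \<in> boundary T")
    case True
    define w0 where "w0 = pref p (Suc (length u))"
    have "w0 \<in> T" using True by (simp add: boundary_def w0_def)
    have "(\<Sum>w\<in>succs T u. chi T w p) = (\<Sum>w\<in>succs T u. if w = w0 then 1 else 0)"
      using True by (intro sum.cong) (auto simp: chi_def through_def w0_def length_succs)
    also have "\<dots> = (if w0 \<in> succs T u then 1 else 0)"
      using finite_succs[OF assms] by simp
    also have "w0 \<in> succs T u \<longleftrightarrow> through p u"
      using \<open>w0 \<in> T\<close> by (simp add: succs_iff w0_def through_def pref_def)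
    finally show ?thesis using True by (simp add: chi_def)
  qed (simp add: chi_def)
qed

end

locale tree_functional = leafless_tree +
  fixes \<phi> :: "((nat \<Rightarrow> 'a) \<Rightarrow> int) \<Rightarrow> int"
  assumes is_hom: "is_hom T \<phi>"
    and phi_chi_root: "\<phi> (chi T []) = 0"
begin

definition charge :: "'a list \<Rightarrow> int" where
  "charge v = \<phi> (chi T v)"

lemma charge_root: "charge [] = 0"
  by (simp add: charge_def phi_chi_root)

lemma charge_eq_sum_succs: "u \<in> T \<Longrightarrow> charge u = (\<Sum>w\<in>succs T u. charge w)"
  unfolding charge_def by (subst chi_eq_sum_succs) (simp_all add: is_hom_sum[OF is_hom] chi_in_CXZ)

text \<open>\<open>edge_mult w1 w2\<close> is the number of edges of \<open>H\<^sup>+\<close> from \<open>w1\<close> to \<open>w2\<close>: each non-canonical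
  vertex \<open>w\<close> is joined to its canonical sibling by \<open>|charge w|\<close> edges, pointing away from \<open>w\<close>
  iff \<open>charge w > 0\<close>.\<close>

definition edge_mult :: "'a list \<Rightarrow> 'a list \<Rightarrow> nat" where
  "edge_mult w1 w2 =
     (if w1 \<in> T \<and> w1 \<noteq> [] \<and> w1 \<noteq> w2 \<and> w2 = canon_child T (butlast w1) then nat (charge w1)
      else if w2 \<in> T \<and> w2 \<noteq> [] \<and> w1 \<noteq> w2 \<and> w1 = canon_child T (butlast w2) then nat (- charge w2)
      else 0)"

lemma edge_mult_siblings:
  assumes "w1 \<in> succs T u" and "w2 \<in> succs T u"
  shows "edge_mult w1 w2 =
    (if w1 \<noteq> canon_child T u \<and> w2 = canon_child T u then nat (charge w1)
     else if w1 = canon_child T u \<and> w2 \<noteq> canon_child T u then nat (- charge w2)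
     else 0)"
  using assms by (auto simp: edge_mult_def succs_iff)

lemma butlast_in: "w \<in> T \<Longrightarrow> butlast w \<in> T"
  by (simp add: butlast_conv_take take_in)

lemma horizontal_canon_sibling:
  assumes "w \<in> T" "w \<noteq> []" "w \<noteq> canon_child T (butlast w)"
  shows "horizontal T w (canon_child T (butlast w))"
  using assms butlast_in[of w] canon_child_in_succs[of "butlast w"]
  unfolding horizontal_def succs_iff by blast

lemma edge_mult_ok: "edge_mult_ok T edge_mult"
  unfolding edge_mult_ok_def
proof (intro allI impI)
  fix w1 w2 assume pos: "edge_mult w1 w2 > 0"
  show "horizontal T w1 w2"
  proof (cases "w1 \<in> T \<and> w1 \<noteq> [] \<and> w1 \<noteq> w2 \<and> w2 = canon_child T (butlast w1)")
    case True
    then show ?thesis using horizontal_canon_sibling by blast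
  next
    case False
    with pos have "w2 \<in> T \<and> w2 \<noteq> [] \<and> w1 \<noteq> w2 \<and> w1 = canon_child T (butlast w2)"
      unfolding edge_mult_def by (simp split: if_split_asm)
    then have "horizontal T w2 w1" using horizontal_canon_sibling by auto
    then show ?thesis unfolding horizontal_def by blast
  qed
qed

lemma sum_sibling_edges:
  assumes "u \<in> T"
  shows "(\<Sum>(w1, w2)\<in>succs T u \<times> succs T u. int (edge_mult w1 w2) * (g w1 - g w2))
       = (\<Sum>w\<in>succs T u - {canon_child T u}. charge w * (g w - g (canon_child T u)))"
proof -
  define C c where "C = succs T u" and "c = canon_child T u"
  have C: "finite C" "c \<in> C"
    using assms by (simp_all add: C_def c_def finite_succs canon_child_in_succs)
  define out inc where
    "out w = (if w \<noteq> c then int (nat (charge w)) * (g w - g c) else 0)" and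
    "inc w = (if w \<noteq> c then int (nat (- charge w)) * (g w - g c) else 0)" for w
  have "int (edge_mult w1 w2) * (g w1 - g w2) =
      (if w2 = c then out w1 else 0) - (if w1 = c then inc w2 else 0)"
    if "w1 \<in> C" "w2 \<in> C" for w1 w2
    using that by (auto simp: edge_mult_siblings C_def c_def out_def inc_def algebra_simps)
  moreover have "(\<Sum>w1\<in>C. \<Sum>w2\<in>C. if w1 = c then inc w2 else 0) = sum inc C"
    using C by (subst sum.swap) simp
  ultimately have "(\<Sum>(w1, w2)\<in>C \<times> C. int (edge_mult w1 w2) * (g w1 - g w2)) = sum out C - sum inc C"
    using C by (simp add: sum.cartesian_product[symmetric] sum_subtractf cong: sum.cong)
  also have "\<dots> = (\<Sum>w\<in>C - {c}. charge w * (g w - g c))"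
    using C by (simp add: out_def inc_def sum.If_cases sum_subtractf[symmetric] Diff_eq
        left_diff_distrib[symmetric] Compl_eq) (intro sum.cong; auto)
  finally show ?thesis by (simp add: C_def c_def)
qed

definition ancestral_sibling_pairs :: "'a list \<Rightarrow> ('a list \<times> 'a list) set" where
  "ancestral_sibling_pairs v = (\<Union>k<length v. succs T (take k v) \<times> succs T (take k v))"

lemma finite_ancestral_sibling_pairs: "v \<in> T \<Longrightarrow> finite (ancestral_sibling_pairs v)"
  unfolding ancestral_sibling_pairs_def by (auto intro!: finite_succs take_in)

lemma ancestral_sibling_pairs_snoc:
  "ancestral_sibling_pairs (u @ [x]) = ancestral_sibling_pairs u \<union> succs T u \<times> succs T u"
  unfolding ancestral_sibling_pairs_def by (auto simp: lessThan_Suc)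

lemma ancestral_sibling_pairs_disjoint:
  "ancestral_sibling_pairs u \<inter> succs T u \<times> succs T u = {}"
  unfolding ancestral_sibling_pairs_def by (auto dest!: length_succs)

lemma chi_canon_path_siblings_differ:
  assumes "w1 \<in> succs T p" and "w2 \<in> succs T p"
    and "chi T v (canon_path T w1) \<noteq> chi T v (canon_path T w2)"
  shows "length p < length v \<and> take (length p) v = p"
proof -
  have in_T: "w1 \<in> T" "w2 \<in> T" using assms(1,2) by (simp_all add: succs_iff)
  obtain w where w: "w \<in> succs T p" "canon_pref T w (length v) = v"
    using assms by (auto simp: chi_canon_path[OF in_T(1)] chi_canon_path[OF in_T(2)] split: if_splits)
  have "canon_pref T w' (length v) = take (length v) p"
    if "length v \<le> length p" "w' \<in> succs T p" for w'
    using that by (auto simp: succs_def canon_pref_short)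
  then have "length p < length v"
    using assms(1,2,3) w by (metis (full_types) in_T chi_canon_path not_le)
  then have "take (length w) v = w"
    using w canon_pref_prefix[of w "length v" T] length_succs[OF w(1)] by simp
  then have "take (length p) v = take (length p) w"
    using length_succs[OF w(1)] by (metis lessI less_imp_le min.absorb1 take_take)
  with \<open>length p < length v\<close> w(1) show ?thesis by (auto simp: succs_def)
qed

definition edge_term :: "'a list \<Rightarrow> 'a list \<times> 'a list \<Rightarrow> int" where
  "edge_term v = (\<lambda>(w1, w2). int (edge_mult w1 w2)
     * (chi T v (canon_path T w1) - chi T v (canon_path T w2)))"

lemma contrib_edges_subset:
  "contrib_edges T (canon_path T) edge_mult v \<subseteq> ancestral_sibling_pairs v"
proof
  fix e assume "e \<in> contrib_edges T (canon_path T) edge_mult v"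
  then obtain w1 w2 where e: "e = (w1, w2)" "edge_mult w1 w2 > 0"
    and differ: "chi T v (canon_path T w1) \<noteq> chi T v (canon_path T w2)"
    by (auto simp: contrib_edges_def)
  then have "horizontal T w1 w2"
    using edge_mult_ok by (simp add: edge_mult_ok_def)
  then obtain p where p: "w1 \<in> succs T p" "w2 \<in> succs T p"
    unfolding horizontal_def by blast
  with chi_canon_path_siblings_differ[OF p differ] show "e \<in> ancestral_sibling_pairs v"
    unfolding ancestral_sibling_pairs_def e by (intro UN_I[of "length p"]) auto
qed

lemma varphi_eq_sum_edge_term:
  "v \<in> T \<Longrightarrow> varphi T (canon_path T) edge_mult v = sum (edge_term v) (ancestral_sibling_pairs v)"
  unfolding varphi_def edge_term_def
  by (rule sum.mono_neutral_left[OF finite_ancestral_sibling_pairs contrib_edges_subset])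
    (auto simp: contrib_edges_def)

lemma edge_term_snoc_ancestral:
  assumes "e \<in> ancestral_sibling_pairs u"
  shows "edge_term (u @ [x]) e = (if canon_child T u = u @ [x] then edge_term u e else 0)"
proof -
  obtain w1 w2 k where e: "e = (w1, w2)" and "k < length u"
    and w: "w1 \<in> succs T (take k u)" "w2 \<in> succs T (take k u)"
    using assms unfolding ancestral_sibling_pairs_def by auto
  have "chi T (u @ [x]) (canon_path T w)
      = (if canon_child T u = u @ [x] then chi T u (canon_path T w) else 0)"
    if "w \<in> succs T (take k u)" for w
  proof -
    have "w \<in> T" and "length w \<le> length u"
      using that length_succs[OF that] \<open>k < length u\<close> by (auto simp: succs_iff)
    then show ?thesis by (auto simp: chi_canon_path canon_pref_Suc_eq_snoc)
  qed
  with w show ?thesis by (simp add: edge_term_def e)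
qed

lemma chi_snoc_canon_path_succs:
  "w \<in> succs T u \<Longrightarrow> chi T (u @ [x]) (canon_path T w) = (if w = u @ [x] then 1 else 0)"
  using length_succs[of w T u] by (simp add: chi_canon_path succs_iff canon_pref_short)

lemma sum_edge_term_eq_charge:
  "v \<in> T \<Longrightarrow> sum (edge_term v) (ancestral_sibling_pairs v) = charge v"
proof (induction v rule: rev_induct)
  case Nil
  then show ?case by (simp add: ancestral_sibling_pairs_def charge_root)
next
  case (snoc x u)
  define v C c where "v = u @ [x]" and "C = succs T u" and "c = canon_child T u"
  have "u \<in> T" using snoc.prems prefix_in by blast
  have "v \<in> C" using snoc.prems by (auto simp: v_def C_def succs_def)
  have C: "finite C" "c \<in> C"
    using \<open>u \<in> T\<close> by (simp_all add: C_def c_def finite_succs canon_child_in_succs)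
  have old: "sum (edge_term v) (ancestral_sibling_pairs u) = (if c = v then charge u else 0)"
    using snoc.IH[OF \<open>u \<in> T\<close>]
    by (cases "c = v") (simp_all add: edge_term_snoc_ancestral v_def c_def cong: sum.cong)
  have new: "sum (edge_term v) (C \<times> C)
      = (\<Sum>w\<in>C - {c}. charge w * ((if w = v then 1 else 0) - (if c = v then 1 else 0)))"
  proof -
    have "sum (edge_term v) (C \<times> C)
        = (\<Sum>w\<in>C - {c}. charge w * (chi T v (canon_path T w) - chi T v (canon_path T c)))"
      unfolding edge_term_def C_def c_def by (rule sum_sibling_edges[OF \<open>u \<in> T\<close>])
    also have "\<dots> = (\<Sum>w\<in>C - {c}. charge w * ((if w = v then 1 else 0) - (if c = v then 1 else 0)))"
      using C(2) by (intro sum.cong) (simp_all add: C_def v_def chi_snoc_canon_path_succs)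
    finally show ?thesis .
  qed
  have "sum (edge_term v) (ancestral_sibling_pairs v)
      = sum (edge_term v) (ancestral_sibling_pairs u) + sum (edge_term v) (C \<times> C)"
    unfolding v_def C_def ancestral_sibling_pairs_snoc
    using ancestral_sibling_pairs_disjoint finite_ancestral_sibling_pairs[OF \<open>u \<in> T\<close>] C(1)
    by (intro sum.union_disjoint) (simp_all add: C_def)
  also have "\<dots> = (if c = v then charge u else 0)
      + (\<Sum>w\<in>C - {c}. charge w * ((if w = v then 1 else 0) - (if c = v then 1 else 0)))"
    using old new by simp
  also have "\<dots> = charge v"
  proof (cases "c = v")
    case True
    have "charge u = charge v + (\<Sum>w\<in>C - {v}. charge w)"
      using charge_eq_sum_succs[OF \<open>u \<in> T\<close>] sum.remove[OF C(1) \<open>v \<in> C\<close>] by (simp add: C_def)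
    with True show ?thesis by (simp add: sum_negf)
  qed (use C \<open>v \<in> C\<close> in \<open>simp add: if_distrib[of "times _"] cong: if_cong\<close>)
  finally show ?case by (simp add: v_def)
qed

end

theorem proposition7p3:
  fixes T :: "'a list set" and \<phi> :: "((nat \<Rightarrow> 'a) \<Rightarrow> int) \<Rightarrow> int"
  assumes "is_tree T"
    and "infinite (boundary T)"
    and "is_hom T \<phi>"
    and "\<phi> (chi T []) = 0"
  shows "\<exists>m \<tau>. edge_mult_ok T m \<and> choice_fun T \<tau>
           \<and> (\<forall>v\<in>T. finite (contrib_edges T \<tau> m v) \<and> varphi T \<tau> m v = \<phi> (chi T v))"
proof -
  interpret tree_functional T \<phi>
    using assms(1,3,4) by unfold_locales
  have "finite (contrib_edges T (canon_path T) edge_mult v)" if "v \<in> T" for v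
    using finite_subset[OF contrib_edges_subset finite_ancestral_sibling_pairs[OF that]] .
  moreover have "varphi T (canon_path T) edge_mult v = \<phi> (chi T v)" if "v \<in> T" for v
    using that by (simp add: varphi_eq_sum_edge_term sum_edge_term_eq_charge charge_def)
  ultimately show ?thesis
    using edge_mult_ok choice_fun_canon_path by blast
qed

end
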